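(* Let $0\le\gamma<1$ and let $f\in\mathcal{B}(\Omega_\gamma)$, with $f(z)=\sum_{n=0}^\infty a_n z^n$ for $z\in\mathbb{D}$. Put $\|f_0\|_r=\sum_{n=1}^\infty |a_n|^2 r^{2n}$. Then $$\sum_{n=0}^\infty |a_n| r^n+\left(\frac{1}{1+|a_0|}+\frac{r}{1-r}\right)\|f_0\|_r\le 1\qquad\text{for all } 0\le r\le r_0:=\frac{1+\gamma}{3+\gamma}.$$ The number $r_0$ cannot be improved: for every $r\in(r_0,1)$ there exists $f\in\mathcal{B}(\Omega_\gamma)$ for which the left-hand side exceeds $1$.
   Context: $\mathbb{D}$ is the open unit disk. For $0\le\gamma<1$, $\Omega_\gamma=\{z\in\mathbb{C}: |z+\frac{\gamma}{1-\gamma}|<\frac{1}{1-\gamma}\}$, a disk containing $\mathbb{D}$. For a simply connected domain $\Omega\supseteq\mathbb{D}$, $\mathcal{B}(\Omega)$ denotes the class of functions $f$ analytic on $\Omega$ with $f(\Omega)\subseteq\overline{\mathbb{D}}$. *)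

theory Defs
  imports "HOL-Complex_Analysis.Complex_Analysis"
begin

definition Omega :: "real \<Rightarrow> complex set" where
  "Omega \<gamma> = ball (complex_of_real (- \<gamma> / (1 - \<gamma>))) (1 / (1 - \<gamma>))"

definition bclass :: "complex set \<Rightarrow> (complex \<Rightarrow> complex) set" where
  "bclass \<Omega> = {f. f analytic_on \<Omega> \<and> (\<forall>z\<in>\<Omega>. f z \<in> cball 0 1)}"

definition taylor_coeff :: "(complex \<Rightarrow> complex) \<Rightarrow> nat \<Rightarrow> complex" where
  "taylor_coeff f n = (deriv ^^ n) f 0 / fact n"

definition bohr_lhs :: "(complex \<Rightarrow> complex) \<Rightarrow> real \<Rightarrow> real" where
  "bohr_lhs f r =
     (let a = taylor_coeff f;
          nf0 = (\<Sum>n. norm (a (Suc n)) ^ 2 * r ^ (2 * Suc n))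
      in (\<Sum>n. norm (a n) * r ^ n) + (1 / (1 + norm (a 0)) + r / (1 - r)) * nf0)"

end

theory Submission
  imports Defs
begin

text \<open>
  The map \<open>\<phi>(z) = z / (1 + \<gamma> - \<gamma> z)\<close> sends \<open>\<Omega>\<^sub>\<gamma>\<close> into the unit disk and is inverted by
  \<open>\<psi>(w) = (1 + \<gamma>) w / (1 + \<gamma> w)\<close>, so \<open>f \<in> \<B>(\<Omega>\<^sub>\<gamma>)\<close> factors as \<open>f = G \<circ> \<phi>\<close> with
  \<open>G = f \<circ> \<psi>\<close> bounded by 1 on the disk. The power series of \<open>\<phi>\<close> has nonnegative coefficients,
  and every coefficient of \<open>1 / (1 - \<phi>)\<close> beyond the constant one equals \<open>1 / (1 + \<gamma>)\<close>.
  Together with Wiener's inequality \<open>|G\<^sub>k| \<le> 1 - |G\<^sub>0|\<^sup>2\<close> this gives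
  \<open>|a\<^sub>n| \<le> (1 - |a\<^sub>0|\<^sup>2) / (1 + \<gamma>)\<close> for \<open>n \<ge> 1\<close>. Summing geometric majorants reduces the
  Bohr inequality to an elementary inequality in \<open>|a\<^sub>0|\<close> that holds up to \<open>r = (1 + \<gamma>) / (3 + \<gamma>)\<close>.
  Beyond that radius it fails for \<open>\<phi>\<close> followed by the disk automorphism
  \<open>w \<mapsto> (a - w) / (1 - a w)\<close> with \<open>a\<close> close enough to 1.
\<close>

section \<open>Formal power series\<close>

lemma fps_mult_linear_nth:
  fixes F :: "'a::comm_ring_1 fps"
  shows "(F * (fps_const \<alpha> - fps_const \<beta> * fps_X)) $ m
       = \<alpha> * F $ m - (if m = 0 then 0 else \<beta> * F $ (m - 1))"
proof -
  have "F * (fps_const \<alpha> - fps_const \<beta> * fps_X) = fps_const \<alpha> * F - fps_const \<beta> * (fps_X * F)"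
    by (simp add: algebra_simps)
  then show ?thesis by simp
qed

lemma fps_of_real_mult_linear:
  assumes "\<And>m. \<alpha> * a m - (if m = 0 then 0 else \<beta> * a (m - 1)) = b m"
  shows "Abs_fps (\<lambda>m. complex_of_real (a m)) * (fps_const (of_real \<alpha>) - fps_const (of_real \<beta>) * fps_X)
       = Abs_fps (\<lambda>m. of_real (b m))"
proof (rule fps_ext)
  fix m
  show "(Abs_fps (\<lambda>m. complex_of_real (a m)) * (fps_const (of_real \<alpha>) - fps_const (of_real \<beta>) * fps_X)) $ m
      = Abs_fps (\<lambda>m. complex_of_real (b m)) $ m"
    unfolding fps_mult_linear_nth fps_nth_Abs_fps assms[symmetric] by simp
qed

lemma fps_divide_eqI:
  fixes D E N :: "'a::field fps"
  assumes "D $ 0 \<noteq> 0" "E * D = N"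
  shows "N / D = E"
  using assms by (simp add: fps_divide_unit assms(2)[symmetric] mult.assoc inverse_mult_eq_1')

lemma fps_divide_nth_first_nonzero:
  fixes N D :: "'a::field fps"
  assumes "D $ 0 \<noteq> 0" "\<And>i. i < k \<Longrightarrow> N $ i = 0"
  shows "(N / D) $ k = N $ k / D $ 0"
proof -
  have "(N / D) $ k = (\<Sum>i=0..k. N $ i * inverse D $ (k - i))"
    using assms(1) by (simp add: fps_divide_unit fps_mult_nth)
  also have "\<dots> = N $ k * inverse D $ 0"
    using assms(2) by (subst sum.remove[of _ k]) (auto intro!: sum.neutral)
  finally show ?thesis
    using assms(1) by (simp add: divide_inverse)
qed

lemma fps_geometric_partial_sum_nth:
  fixes P U :: "'a::comm_ring_1 fps"
  assumes "U * (1 - P) = 1" "P $ 0 = 0"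
  shows "(\<Sum>i\<le>n. P ^ i) $ n = U $ n"
proof -
  have high: "(P ^ Suc n) $ j = 0" if "j \<le> n" for j
  proof (cases "P = 0")
    case False
    then have "1 \<le> subdegree P"
      using assms(2) by (intro subdegree_geI) auto
    then have "Suc n * 1 \<le> Suc n * subdegree P"
      by (rule mult_le_mono2)
    then show ?thesis
      using that by (intro fps_pow_nth_below_subdegree) simp
  qed simp
  have "(\<Sum>i\<le>n. P ^ i) = U * ((1 - P) * (\<Sum>i\<le>n. P ^ i))"
    using assms(1) by (simp add: mult.assoc[symmetric])
  also have "\<dots> = U - U * P ^ Suc n"
    by (simp add: sum_gp_basic right_diff_distrib)
  finally have "(\<Sum>i\<le>n. P ^ i) = U - U * P ^ Suc n" .
  moreover have "(U * P ^ Suc n) $ n = 0"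
    unfolding fps_mult_nth using high by (intro sum.neutral) auto
  ultimately show ?thesis
    by (simp del: power_Suc)
qed

lemma nonneg_Reals_sum:
  "(\<And>i. i \<in> A \<Longrightarrow> f i \<in> \<real>\<^sub>\<ge>\<^sub>0) \<Longrightarrow> sum f A \<in> \<real>\<^sub>\<ge>\<^sub>0"
  by (induction A rule: infinite_finite_induct) auto

lemma fps_power_nth_nonneg_Reals:
  fixes P :: "'a::real_algebra_1 fps"
  assumes "\<And>m. P $ m \<in> \<real>\<^sub>\<ge>\<^sub>0"
  shows "(P ^ i) $ n \<in> \<real>\<^sub>\<ge>\<^sub>0"
proof (induction i arbitrary: n)
  case 0
  then show ?case by simp
next
  case (Suc i)
  then show ?case
    using assms by (simp add: fps_mult_nth nonneg_Reals_sum)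
qed

lemma norm_sum_nonneg_Reals:
  fixes f :: "'b \<Rightarrow> complex"
  assumes "\<And>i. i \<in> A \<Longrightarrow> f i \<in> \<real>\<^sub>\<ge>\<^sub>0"
  shows "norm (sum f A) = (\<Sum>i\<in>A. norm (f i))"
  using assms nonneg_Reals_sum[of A f] by (simp add: nonneg_Reals_cmod_eq_Re)

lemma norm_fps_compose_nth_le:
  fixes G P :: "complex fps"
  assumes "\<And>m. P $ m \<in> \<real>\<^sub>\<ge>\<^sub>0" "\<And>i. 0 < i \<Longrightarrow> norm (G $ i) \<le> W" "0 < n"
  shows "norm ((G oo P) $ n) \<le> W * norm ((\<Sum>i\<le>n. P ^ i) $ n)"
proof -
  have "norm ((G oo P) $ n) \<le> (\<Sum>i=0..n. norm (G $ i) * norm ((P ^ i) $ n))"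
    unfolding fps_compose_nth by (rule order_trans[OF norm_sum]) (simp add: norm_mult)
  also have "\<dots> \<le> (\<Sum>i=0..n. W * norm ((P ^ i) $ n))"
  proof (intro sum_mono)
    fix i
    show "norm (G $ i) * norm ((P ^ i) $ n) \<le> W * norm ((P ^ i) $ n)"
      using assms(2,3) by (cases "i = 0") (auto intro: mult_right_mono)
  qed
  also have "\<dots> = W * norm ((\<Sum>i\<le>n. P ^ i) $ n)"
    using fps_power_nth_nonneg_Reals[OF assms(1)]
    by (simp add: fps_sum_nth norm_sum_nonneg_Reals sum_distrib_left atLeast0AtMost)
  finally show ?thesis .
qed

lemma taylor_coeff_zero [simp]: "taylor_coeff f 0 = f 0"
  by (simp add: taylor_coeff_def)

lemma taylor_coeff_eq_fps_nth:
  "f has_fps_expansion F \<Longrightarrow> taylor_coeff f n = F $ n"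
  by (simp add: taylor_coeff_def fps_nth_fps_expansion)

section \<open>Wiener's inequality\<close>

definition root_unity :: "nat \<Rightarrow> nat \<Rightarrow> complex" where
  "root_unity k j = exp (2 * of_real pi * \<i> * of_nat j / of_nat k)"

lemma norm_root_unity [simp]: "norm (root_unity k j) = 1"
  by (simp add: root_unity_def)

lemma sum_root_unity_power:
  assumes "0 < k"
  shows "(\<Sum>j<k. root_unity k j ^ m) = (if k dvd m then of_nat k else 0)"
proof -
  define \<zeta> where "\<zeta> = root_unity k m"
  have power_eq: "root_unity k j ^ m = \<zeta> ^ j" for j
    unfolding \<zeta>_def root_unity_def exp_of_nat_mult[symmetric] by (simp add: field_simps)
  show ?thesis
  proof (cases "k dvd m")
    case True
    then have "\<zeta> = 1"
      using assms by (simp add: \<zeta>_def root_unity_def complex_root_unity_eq_1)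
    then show ?thesis
      using True by (simp add: power_eq)
  next
    case False
    then have "\<zeta> \<noteq> 1"
      using assms by (simp add: \<zeta>_def root_unity_def complex_root_unity_eq_1)
    moreover have "\<zeta> ^ k = 1"
      using power_eq[of k] assms by (simp add: root_unity_def)
    ultimately show ?thesis
      using False by (simp add: power_eq geometric_sum)
  qed
qed

definition rotation_average :: "nat \<Rightarrow> (complex \<Rightarrow> complex) \<Rightarrow> complex \<Rightarrow> complex" where
  "rotation_average k G w = (\<Sum>j<k. G (root_unity k j * w)) / of_nat k"

lemma rotation_average_holomorphic:
  assumes "G holomorphic_on ball 0 1"
  shows "rotation_average k G holomorphic_on ball 0 1"
  unfolding rotation_average_def[abs_def]
  by (intro holomorphic_intros holomorphic_on_compose_gen[OF _ assms, unfolded o_def]) (auto simp: norm_mult)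

lemma norm_rotation_average_le:
  assumes "\<And>w. w \<in> ball 0 1 \<Longrightarrow> norm (G w) \<le> M" "0 < k" "w \<in> ball 0 1"
  shows "norm (rotation_average k G w) \<le> M"
proof -
  have "norm (rotation_average k G w) = norm (\<Sum>j<k. G (root_unity k j * w)) / of_nat k"
    by (simp add: rotation_average_def norm_divide)
  also have "\<dots> \<le> (\<Sum>j<k. M) / of_nat k"
    using assms(3) by (intro divide_right_mono sum_norm_le assms(1)) (simp_all add: norm_mult)
  also have "\<dots> = M"
    using assms(2) by simp
  finally show ?thesis .
qed

lemma rotation_average_has_fps_expansion:
  fixes G :: "complex \<Rightarrow> complex"
  assumes "G holomorphic_on ball 0 1" "0 < k"
  shows "rotation_average k G has_fps_expansion Abs_fps (\<lambda>m. if k dvd m then taylor_coeff G m else 0)"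
proof -
  have rotate_in_ball: "root_unity k j * w \<in> ball 0 1" if "w \<in> ball 0 1" for j w
    using that by (simp add: norm_mult)
  have "(\<lambda>w. G (root_unity k j * w)) holomorphic_on ball 0 1" for j
    using rotate_in_ball
    by (intro holomorphic_on_compose_gen[OF _ assms(1), unfolded o_def] holomorphic_intros) auto
  moreover have "(deriv ^^ m) (\<lambda>w. G (root_unity k j * w)) 0 = root_unity k j ^ m * (deriv ^^ m) G 0" for j m
    using higher_deriv_compose_linear[where S="ball 0 1" and T="ball 0 1" and z=0 and u="root_unity k j",
        OF assms(1)] rotate_in_ball by simp
  ultimately have rotation_expansion: "(\<lambda>w. G (root_unity k j * w)) has_fps_expansion
      Abs_fps (\<lambda>m. root_unity k j ^ m * taylor_coeff G m)" for j
    by (intro has_fps_expansion_schematicI[OF has_fps_expansion_fps_expansion[OF open_ball]])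
       (auto simp: fps_eq_iff fps_expansion_def taylor_coeff_def)
  have "(\<lambda>w. (\<Sum>j<k. G (root_unity k j * w)) * (1 / of_nat k)) has_fps_expansion
      (\<Sum>j<k. Abs_fps (\<lambda>m. root_unity k j ^ m * taylor_coeff G m)) * fps_const (1 / of_nat k)"
    by (intro fps_expansion_intros rotation_expansion)
  also have "(\<Sum>j<k. Abs_fps (\<lambda>m. root_unity k j ^ m * taylor_coeff G m)) * fps_const (1 / of_nat k)
      = Abs_fps (\<lambda>m. if k dvd m then taylor_coeff G m else 0)"
    using assms(2)
    by (simp add: fps_eq_iff fps_sum_nth sum_distrib_right[symmetric] sum_root_unity_power)
  finally show ?thesis
    by (simp add: rotation_average_def[abs_def])
qed

lemma norm_taylor_coeff_le_bound:
  fixes G :: "complex \<Rightarrow> complex"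
  assumes "G holomorphic_on ball 0 1" "\<And>w. w \<in> ball 0 1 \<Longrightarrow> norm (G w) \<le> M"
  shows "norm (taylor_coeff G k) \<le> M"
proof -
  have "norm (taylor_coeff G k) \<le> M / r ^ k" if r: "0 < r" "r < 1" for r
  proof -
    have "norm ((deriv ^^ k) G 0) \<le> fact k * M / r ^ k"
    proof (rule Cauchy_inequality)
      show "G holomorphic_on ball 0 r"
        using r by (intro holomorphic_on_subset[OF assms(1)]) auto
      show "continuous_on (cball 0 r) G"
        using r by (intro holomorphic_on_imp_continuous_on holomorphic_on_subset[OF assms(1)]) auto
    qed (use r assms(2) in auto)
    then show ?thesis
      by (simp add: taylor_coeff_def norm_divide field_simps)
  qed
  moreover have "((\<lambda>r. M / r ^ k) \<longlongrightarrow> M / 1 ^ k) (at_left 1)"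
    by (intro tendsto_intros) auto
  moreover have "eventually (\<lambda>r. 0 < r \<and> r < (1::real)) (at_left 1)"
    using eventually_at_left_real[of 0 "1::real"] by (auto elim: eventually_mono)
  ultimately show ?thesis
    by (intro tendsto_lowerbound[of _ M "at_left 1"]) (auto elim: eventually_mono)
qed

lemma norm_diff_le_norm_one_minus_cnj_mult:
  fixes c h :: complex
  assumes "norm c \<le> 1" "norm h \<le> 1"
  shows "norm (h - c) \<le> norm (1 - cnj c * h)"
proof -
  have "complex_of_real ((norm (1 - cnj c * h))\<^sup>2 - (norm (h - c))\<^sup>2)
      = complex_of_real ((1 - (norm c)\<^sup>2) * (1 - (norm h)\<^sup>2))"
    unfolding of_real_diff of_real_mult complex_norm_square of_real_1 by (simp add: algebra_simps)
  then have "(norm (1 - cnj c * h))\<^sup>2 - (norm (h - c))\<^sup>2 = (1 - (norm c)\<^sup>2) * (1 - (norm h)\<^sup>2)"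
    using of_real_eq_iff by blast
  moreover have "(1 - (norm c)\<^sup>2) * (1 - (norm h)\<^sup>2) \<ge> 0"
    using assms by (intro mult_nonneg_nonneg) (auto simp: power_le_one abs_square_le_1)
  ultimately have "(norm (h - c))\<^sup>2 \<le> (norm (1 - cnj c * h))\<^sup>2"
    by linarith
  then show ?thesis
    by (rule power2_le_imp_le) simp
qed

lemma taylor_coeff_Moebius_gap:
  fixes h :: "complex \<Rightarrow> complex" and hf :: "complex fps"
  assumes h: "h has_fps_expansion hf" and c: "hf $ 0 = c" "norm c < 1"
    and gap: "\<And>i. 0 < i \<Longrightarrow> i < k \<Longrightarrow> hf $ i = 0" and k: "0 < k"
  shows "taylor_coeff (\<lambda>w. (h w - c) / (1 - cnj c * h w)) k = hf $ k / of_real (1 - (norm c)\<^sup>2)"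
proof -
  have D0: "(1 - fps_const (cnj c) * hf) $ 0 = of_real (1 - (norm c)\<^sup>2)"
    by (simp add: c complex_norm_square[symmetric] mult.commute del: of_real_power)
  have "0 < 1 - (norm c)\<^sup>2"
    using c(2) by (simp add: abs_square_less_1)
  then have D0_nonzero: "(1 - fps_const (cnj c) * hf) $ 0 \<noteq> 0"
    unfolding D0 of_real_eq_0_iff by simp
  then have "(\<lambda>w. (h w - c) / (1 - cnj c * h w)) has_fps_expansion (hf - fps_const c) / (1 - fps_const (cnj c) * hf)"
    by (intro has_fps_expansion_divide' has_fps_expansion_diff has_fps_expansion_cmult_left
        has_fps_expansion_const has_fps_expansion_1 h) (simp_all add: c)
  then have "taylor_coeff (\<lambda>w. (h w - c) / (1 - cnj c * h w)) k
      = ((hf - fps_const c) / (1 - fps_const (cnj c) * hf)) $ k"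
    by (rule taylor_coeff_eq_fps_nth)
  also have "\<dots> = (hf - fps_const c) $ k / (1 - fps_const (cnj c) * hf) $ 0"
    using D0_nonzero
  proof (rule fps_divide_nth_first_nonzero)
    show "(hf - fps_const c) $ i = 0" if "i < k" for i
      using that c gap by (cases "i = 0") auto
  qed
  also have "\<dots> = hf $ k / of_real (1 - (norm c)\<^sup>2)"
    unfolding D0 using k by (simp del: of_real_diff of_real_power)
  finally show ?thesis .
qed

text \<open>
  Averaging \<open>G\<close> over the rotations by \<open>k\<close>-th roots of unity keeps only the coefficients of index
  divisible by \<open>k\<close>. The disk automorphism moving \<open>G 0\<close> to \<open>0\<close> then turns the \<open>k\<close>-th coefficient
  into \<open>G\<^sub>k / (1 - |G 0|\<^sup>2)\<close>, which the Cauchy estimate bounds by 1.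
\<close>

lemma wiener_inequality_interior:
  fixes G :: "complex \<Rightarrow> complex"
  assumes holo: "G holomorphic_on ball 0 1" and bound: "\<And>w. w \<in> ball 0 1 \<Longrightarrow> norm (G w) \<le> 1"
    and centre: "norm (G 0) < 1" and k: "0 < k"
  shows "norm (taylor_coeff G k) \<le> 1 - (norm (G 0))\<^sup>2"
proof -
  define c where "c = G 0"
  define h where "h = rotation_average k G"
  define H where "H w = (h w - c) / (1 - cnj c * h w)" for w
  have h_holo: "h holomorphic_on ball 0 1"
    unfolding h_def using holo by (rule rotation_average_holomorphic)
  have h_bound: "norm (h w) \<le> 1" if "w \<in> ball 0 1" for w
    unfolding h_def using bound k that by (rule norm_rotation_average_le)
  have denom_nonzero: "1 - cnj c * h w \<noteq> 0" if "w \<in> ball 0 1" for w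
  proof -
    have "norm (cnj c * h w) \<le> norm c"
      using h_bound[OF that] by (simp add: norm_mult mult_left_le)
    then have "norm (cnj c * h w) < 1"
      using centre by (simp add: c_def)
    then show ?thesis
      by (auto simp del: complex_cnj_mult)
  qed
  have "norm (taylor_coeff H k) \<le> 1"
  proof (rule norm_taylor_coeff_le_bound)
    show "H holomorphic_on ball 0 1"
      unfolding H_def[abs_def] by (intro holomorphic_intros h_holo denom_nonzero)
    show "norm (H w) \<le> 1" if "w \<in> ball 0 1" for w
      using norm_diff_le_norm_one_minus_cnj_mult[of c "h w"] centre h_bound[OF that] denom_nonzero[OF that]
      by (simp add: H_def c_def norm_divide divide_le_eq_1)
  qed
  moreover have "taylor_coeff H k = taylor_coeff G k / of_real (1 - (norm c)\<^sup>2)"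
    unfolding H_def[abs_def] using centre k
    by (subst taylor_coeff_Moebius_gap[OF rotation_average_has_fps_expansion[OF holo k, folded h_def]])
       (auto simp: c_def dest: dvd_imp_le)
  moreover have "0 < 1 - (norm c)\<^sup>2"
    using centre by (simp add: c_def abs_square_less_1)
  ultimately have "norm (taylor_coeff G k) = norm (taylor_coeff H k) * (1 - (norm c)\<^sup>2)"
    by (simp add: norm_divide del: of_real_diff of_real_power)
  also have "\<dots> \<le> 1 - (norm c)\<^sup>2"
    using \<open>norm (taylor_coeff H k) \<le> 1\<close> \<open>0 < 1 - (norm c)\<^sup>2\<close> by (simp add: mult_left_le_one_le)
  finally show ?thesis
    by (simp add: c_def)
qed

text \<open>If \<open>|G 0| = 1\<close> the automorphism degenerates; apply the interior case to \<open>s G\<close> and let \<open>s \<rightarrow> 1\<close>.\<close>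

lemma wiener_inequality:
  fixes G :: "complex \<Rightarrow> complex"
  assumes holo: "G holomorphic_on ball 0 1" and bound: "\<And>w. w \<in> ball 0 1 \<Longrightarrow> norm (G w) \<le> 1"
    and k: "0 < k"
  shows "norm (taylor_coeff G k) \<le> 1 - (norm (G 0))\<^sup>2"
proof -
  have "s * norm (taylor_coeff G k) \<le> 1 - s\<^sup>2 * (norm (G 0))\<^sup>2" if s: "0 < s" "s < 1" for s
  proof -
    have "norm (taylor_coeff (\<lambda>w. of_real s * G w) k) \<le> 1 - (norm (of_real s * G 0))\<^sup>2"
    proof (rule wiener_inequality_interior[OF _ _ _ k])
      show "(\<lambda>w. of_real s * G w) holomorphic_on ball 0 1"
        by (intro holomorphic_intros holo)
      show "norm (of_real s * G w) \<le> 1" if "w \<in> ball 0 1" for w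
        using bound[OF that] s by (simp add: norm_mult mult_le_one)
      have "s * norm (G 0) \<le> s"
        using bound[of 0] s by (intro mult_left_le) auto
      moreover have "norm (of_real s * G 0) = s * norm (G 0)"
        using s by (simp add: norm_mult)
      ultimately show "norm (of_real s * G 0) < 1"
        using s by linarith
    qed
    moreover have "taylor_coeff (\<lambda>w. of_real s * G w) k = of_real s * taylor_coeff G k"
      using higher_deriv_cmult[OF holo, of 0 k "of_real s"] by (simp add: taylor_coeff_def)
    ultimately show ?thesis
      using s by (simp add: norm_mult power_mult_distrib)
  qed
  then have "eventually (\<lambda>s. s * norm (taylor_coeff G k) \<le> 1 - s\<^sup>2 * (norm (G 0))\<^sup>2) (at_left 1)"
    using eventually_at_left_real[of 0 "1::real"] by (auto elim: eventually_mono)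
  moreover have "((\<lambda>s. s * norm (taylor_coeff G k)) \<longlongrightarrow> 1 * norm (taylor_coeff G k)) (at_left 1)"
    and "((\<lambda>s. 1 - s\<^sup>2 * (norm (G 0))\<^sup>2) \<longlongrightarrow> 1 - 1\<^sup>2 * (norm (G 0))\<^sup>2) (at_left (1::real))"
    by (intro tendsto_intros)+
  ultimately show ?thesis
    using tendsto_le[of "at_left (1::real)"] by fastforce
qed

section \<open>The disk Omega and its parametrisation by the unit disk\<close>

lemma one_plus_of_real_nonzero:
  assumes "0 \<le> \<gamma>"
  shows "1 + complex_of_real \<gamma> \<noteq> 0"
proof -
  have "complex_of_real (1 + \<gamma>) \<noteq> 0"
    using assms by (simp only: of_real_eq_0_iff)
  then show ?thesis
    by simp
qed

lemma Omega_norm_identity: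
  fixes z :: complex and \<gamma> :: real
  shows "(1 - \<gamma>) * ((norm (of_real (1 + \<gamma>) - of_real \<gamma> * z))\<^sup>2 - (norm z)\<^sup>2)
       = (1 + \<gamma>) * (1 - (norm (of_real (1 - \<gamma>) * z + of_real \<gamma>))\<^sup>2)"
  unfolding cmod_power2 by (simp add: power2_eq_square algebra_simps)

lemma mem_Omega_iff:
  assumes "0 \<le> \<gamma>" "\<gamma> < 1"
  shows "z \<in> Omega \<gamma> \<longleftrightarrow> norm z < norm (of_real (1 + \<gamma>) - of_real \<gamma> * z)"
proof -
  define c where "c = complex_of_real (- \<gamma> / (1 - \<gamma>))"
  define w where "w = of_real (1 - \<gamma>) * z + of_real \<gamma>"
  have "w = of_real (1 - \<gamma>) * (z - c)"
    using assms by (simp add: w_def c_def field_simps)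
  then have "norm w = (1 - \<gamma>) * norm (z - c)"
    using assms by (simp add: norm_mult del: of_real_diff)
  then have "z \<in> Omega \<gamma> \<longleftrightarrow> (norm w)\<^sup>2 < 1"
    using assms by (simp add: Omega_def c_def dist_norm norm_minus_commute
        pos_less_divide_eq mult.commute abs_square_less_1)
  also have "\<dots> \<longleftrightarrow> 0 < (1 - \<gamma>) * ((norm (of_real (1 + \<gamma>) - of_real \<gamma> * z))\<^sup>2 - (norm z)\<^sup>2)"
    unfolding Omega_norm_identity w_def using assms by (simp add: zero_less_mult_iff)
  also have "\<dots> \<longleftrightarrow> (norm z)\<^sup>2 < (norm (of_real (1 + \<gamma>) - of_real \<gamma> * z))\<^sup>2"
    using assms by (simp add: zero_less_mult_iff)
  also have "\<dots> \<longleftrightarrow> norm z < norm (of_real (1 + \<gamma>) - of_real \<gamma> * z)"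
    using power2_less_imp_less power_strict_mono by fastforce
  finally show ?thesis .
qed

lemma open_Omega: "open (Omega \<gamma>)"
  by (simp add: Omega_def)

lemma zero_in_Omega: "0 \<le> \<gamma> \<Longrightarrow> \<gamma> < 1 \<Longrightarrow> 0 \<in> Omega \<gamma>"
  by (simp add: mem_Omega_iff one_plus_of_real_nonzero)

lemma Omega_denominator_nonzero:
  assumes "0 \<le> \<gamma>" "\<gamma> < 1" "z \<in> Omega \<gamma>"
  shows "of_real (1 + \<gamma>) - of_real \<gamma> * z \<noteq> 0"
  using assms mem_Omega_iff by fastforce

definition omega_to_disk :: "real \<Rightarrow> complex \<Rightarrow> complex" where
  "omega_to_disk \<gamma> z = z / (of_real (1 + \<gamma>) - of_real \<gamma> * z)"

definition disk_to_omega :: "real \<Rightarrow> complex \<Rightarrow> complex" where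
  "disk_to_omega \<gamma> w = of_real (1 + \<gamma>) * w / (1 + of_real \<gamma> * w)"

lemma norm_omega_to_disk_less_1:
  assumes "0 \<le> \<gamma>" "\<gamma> < 1" "z \<in> Omega \<gamma>"
  shows "norm (omega_to_disk \<gamma> z) < 1"
  using assms Omega_denominator_nonzero[OF assms]
  by (simp add: omega_to_disk_def norm_divide mem_Omega_iff divide_less_eq_1_pos)

lemma disk_to_omega_denominator_nonzero:
  fixes w :: complex
  assumes "0 \<le> \<gamma>" "\<gamma> < 1" "w \<in> ball 0 1"
  shows "1 + of_real \<gamma> * w \<noteq> 0"
proof -
  have "norm (of_real \<gamma> * w) < 1"
    using assms mult_left_le_one_le[of "norm w" \<gamma>] by (simp add: norm_mult)
  then show ?thesis
    by (metis add.inverse_unique norm_minus_cancel norm_one order.irrefl)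
qed

lemma disk_to_omega_in_Omega:
  assumes "0 \<le> \<gamma>" "\<gamma> < 1" "w \<in> ball 0 1"
  shows "disk_to_omega \<gamma> w \<in> Omega \<gamma>"
proof -
  define d where "d = of_real (1 + \<gamma>) - of_real \<gamma> * disk_to_omega \<gamma> w"
  have "d = of_real (1 + \<gamma>) / (1 + of_real \<gamma> * w)"
    using disk_to_omega_denominator_nonzero[OF assms]
    by (simp add: d_def disk_to_omega_def field_simps)
  then have "disk_to_omega \<gamma> w = w * d" and "d \<noteq> 0"
    using assms disk_to_omega_denominator_nonzero[OF assms] one_plus_of_real_nonzero[of \<gamma>]
    by (auto simp: disk_to_omega_def)
  then have "norm (disk_to_omega \<gamma> w) < norm d"
    using assms by (simp add: norm_mult)
  then show ?thesis
    using assms by (simp add: mem_Omega_iff d_def)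
qed

lemma disk_to_omega_holomorphic:
  assumes "0 \<le> \<gamma>" "\<gamma> < 1"
  shows "disk_to_omega \<gamma> holomorphic_on ball 0 1"
  unfolding disk_to_omega_def[abs_def]
  using disk_to_omega_denominator_nonzero[OF assms] by (intro holomorphic_intros) (auto simp: dist_norm)

lemma disk_to_omega_omega_to_disk:
  assumes "0 \<le> \<gamma>" "of_real (1 + \<gamma>) - of_real \<gamma> * z \<noteq> 0"
  shows "disk_to_omega \<gamma> (omega_to_disk \<gamma> z) = z"
proof -
  have "1 + of_real \<gamma> * omega_to_disk \<gamma> z = of_real (1 + \<gamma>) / (of_real (1 + \<gamma>) - of_real \<gamma> * z)"
    using assms(2) by (simp add: omega_to_disk_def field_simps)
  then show ?thesis
    using assms one_plus_of_real_nonzero[of \<gamma>] by (simp add: disk_to_omega_def omega_to_disk_def)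
qed

text \<open>\<open>\<phi>(z) = z / ((1 + \<gamma>) (1 - \<gamma> z / (1 + \<gamma>)))\<close> expanded as a geometric series.\<close>

definition omega_to_disk_fps :: "real \<Rightarrow> complex fps" where
  "omega_to_disk_fps \<gamma> = Abs_fps (\<lambda>m. of_real (if m = 0 then 0 else \<gamma> ^ (m - 1) / (1 + \<gamma>) ^ m))"

lemma omega_to_disk_fps_nonneg: "0 \<le> \<gamma> \<Longrightarrow> omega_to_disk_fps \<gamma> $ m \<in> \<real>\<^sub>\<ge>\<^sub>0"
  by (simp add: omega_to_disk_fps_def)

lemma omega_to_disk_fps_times_denominator:
  assumes "0 \<le> \<gamma>"
  shows "omega_to_disk_fps \<gamma> * (fps_const (of_real (1 + \<gamma>)) - fps_const (of_real \<gamma>) * fps_X) = fps_X"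
proof -
  have "fps_X = Abs_fps (\<lambda>m. complex_of_real (if m = 1 then 1 else 0))"
    by (rule fps_ext) simp
  also have "\<dots> = omega_to_disk_fps \<gamma> * (fps_const (of_real (1 + \<gamma>)) - fps_const (of_real \<gamma>) * fps_X)"
    unfolding omega_to_disk_fps_def
  proof (rule fps_of_real_mult_linear[symmetric])
    fix m :: nat
    show "(1 + \<gamma>) * (if m = 0 then 0 else \<gamma> ^ (m - 1) / (1 + \<gamma>) ^ m)
        - (if m = 0 then 0 else \<gamma> * (if m - 1 = 0 then 0 else \<gamma> ^ (m - 1 - 1) / (1 + \<gamma>) ^ (m - 1)))
        = (if m = 1 then 1 else 0)"
    proof (cases m)
      case (Suc k)
      have "(1 + \<gamma>) * (\<gamma> ^ k / (1 + \<gamma>) ^ Suc k) = \<gamma> ^ k / (1 + \<gamma>) ^ k"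
        using assms by (simp only: power_Suc) simp
      then show ?thesis
        using Suc by (cases k) simp_all
    qed simp
  qed
  finally show ?thesis ..
qed

lemma omega_to_disk_has_fps_expansion:
  assumes "0 \<le> \<gamma>"
  shows "omega_to_disk \<gamma> has_fps_expansion omega_to_disk_fps \<gamma>"
proof -
  define D where "D = fps_const (complex_of_real (1 + \<gamma>)) - fps_const (of_real \<gamma>) * fps_X"
  have "D $ 0 \<noteq> 0"
    using one_plus_of_real_nonzero[OF assms] by (simp add: D_def)
  then have "omega_to_disk \<gamma> has_fps_expansion fps_X / D"
    unfolding omega_to_disk_def[abs_def] D_def
    by (intro fps_expansion_intros) (simp add: D_def)
  also have "fps_X / D = omega_to_disk_fps \<gamma>"
    using \<open>D $ 0 \<noteq> 0\<close> omega_to_disk_fps_times_denominator[OF assms]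
    by (intro fps_divide_eqI) (simp_all add: D_def)
  finally show ?thesis .
qed

lemma omega_to_disk_fps_geometric_nth:
  assumes "0 \<le> \<gamma>" "0 < n"
  shows "(\<Sum>i\<le>n. omega_to_disk_fps \<gamma> ^ i) $ n = of_real (1 / (1 + \<gamma>))"
proof -
  define P where "P = omega_to_disk_fps \<gamma>"
  define D where "D = fps_const (complex_of_real (1 + \<gamma>)) - fps_const (of_real \<gamma>) * fps_X"
  \<comment> \<open>\<open>U = 1 / (1 - \<phi>)\<close>, because \<open>1 - \<phi>(z) = (1 + \<gamma>) (1 - z) / (1 + \<gamma> - \<gamma> z)\<close>\<close>
  define U where "U = Abs_fps (\<lambda>m. complex_of_real (if m = 0 then 1 else 1 / (1 + \<gamma>)))"
  have D_minus_X: "D - fps_X = fps_const (of_real (1 + \<gamma>)) - fps_const (of_real (1 + \<gamma>)) * fps_X"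
    by (simp add: D_def algebra_simps)
  have "U * (D - fps_X) = Abs_fps (\<lambda>m. of_real (if m = 0 then 1 + \<gamma> else if m = 1 then - \<gamma> else 0))"
    unfolding U_def D_minus_X by (rule fps_of_real_mult_linear) (use assms(1) in simp)
  also have "\<dots> = D"
    by (rule fps_ext) (simp add: D_def)
  finally have "U * (D - fps_X) = D" .
  then have "U * (1 - P) * D = 1 * D"
    using omega_to_disk_fps_times_denominator[OF assms(1)] by (simp add: P_def D_def algebra_simps)
  moreover have "D $ 0 \<noteq> 0"
    using one_plus_of_real_nonzero[OF assms(1)] by (simp add: D_def)
  ultimately have "U * (1 - P) = 1"
    by (metis mult_cancel_right fps_nonzeroI)
  then show ?thesis
    using assms(2) fps_geometric_partial_sum_nth[of U P n] by (simp add: P_def U_def omega_to_disk_fps_def)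
qed

lemma holomorphic_on_compose_disk_to_omega:
  assumes "0 \<le> \<gamma>" "\<gamma> < 1" "f holomorphic_on Omega \<gamma>"
  shows "(f \<circ> disk_to_omega \<gamma>) holomorphic_on ball 0 1"
  using disk_to_omega_in_Omega[OF assms(1,2)]
  by (intro holomorphic_on_compose_gen[OF disk_to_omega_holomorphic[OF assms(1,2)] assms(3)]) auto

lemma has_fps_expansion_via_disk:
  assumes "0 \<le> \<gamma>" "\<gamma> < 1" "f holomorphic_on Omega \<gamma>"
  shows "f has_fps_expansion (fps_expansion (f \<circ> disk_to_omega \<gamma>) 0 oo omega_to_disk_fps \<gamma>)"
proof -
  have "(f \<circ> disk_to_omega \<gamma>) has_fps_expansion fps_expansion (f \<circ> disk_to_omega \<gamma>) 0"
    using holomorphic_on_compose_disk_to_omega[OF assms] by (intro has_fps_expansion_fps_expansion) auto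
  then have "(f \<circ> disk_to_omega \<gamma> \<circ> omega_to_disk \<gamma>) has_fps_expansion
      (fps_expansion (f \<circ> disk_to_omega \<gamma>) 0 oo omega_to_disk_fps \<gamma>)"
    using omega_to_disk_has_fps_expansion[OF assms(1)]
    by (rule has_fps_expansion_compose) (simp add: omega_to_disk_fps_def)
  moreover have "eventually (\<lambda>z. z \<in> Omega \<gamma>) (nhds 0)"
    using assms(1,2) by (intro eventually_nhds_in_open open_Omega zero_in_Omega)
  then have "eventually (\<lambda>z. (f \<circ> disk_to_omega \<gamma> \<circ> omega_to_disk \<gamma>) z = f z) (nhds 0)"
    by eventually_elim
       (simp add: disk_to_omega_omega_to_disk[OF assms(1) Omega_denominator_nonzero[OF assms(1,2)]])
  ultimately show ?thesis
    using has_fps_expansion_cong by blast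
qed

lemma bclass_Omega_taylor_coeff_bound:
  assumes "0 \<le> \<gamma>" "\<gamma> < 1" "f \<in> bclass (Omega \<gamma>)" "0 < n"
  shows "norm (taylor_coeff f n) \<le> (1 - (norm (f 0))\<^sup>2) / (1 + \<gamma>)"
proof -
  have f_holo: "f holomorphic_on Omega \<gamma>" and f_bound: "\<And>z. z \<in> Omega \<gamma> \<Longrightarrow> norm (f z) \<le> 1"
    using assms(3) by (auto simp: bclass_def analytic_imp_holomorphic)
  define G where "G = f \<circ> disk_to_omega \<gamma>"
  have G_holo: "G holomorphic_on ball 0 1"
    unfolding G_def using assms(1,2) f_holo by (rule holomorphic_on_compose_disk_to_omega)
  have G_bound: "norm (G w) \<le> 1" if "w \<in> ball 0 1" for w
    using f_bound disk_to_omega_in_Omega[OF assms(1,2) that] by (simp add: G_def)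
  have "G 0 = f 0"
    by (simp add: G_def disk_to_omega_def)
  then have wiener: "norm (fps_expansion G 0 $ i) \<le> 1 - (norm (f 0))\<^sup>2" if "0 < i" for i
    using wiener_inequality[OF G_holo G_bound that] by (simp add: taylor_coeff_def fps_expansion_def)
  have "norm (taylor_coeff f n) = norm ((fps_expansion G 0 oo omega_to_disk_fps \<gamma>) $ n)"
    unfolding G_def by (simp add: taylor_coeff_eq_fps_nth[OF has_fps_expansion_via_disk[OF assms(1,2) f_holo]])
  also have "\<dots> \<le> (1 - (norm (f 0))\<^sup>2) * norm ((\<Sum>i\<le>n. omega_to_disk_fps \<gamma> ^ i) $ n)"
    by (rule norm_fps_compose_nth_le[OF omega_to_disk_fps_nonneg[OF assms(1)] wiener assms(4)])
  also have "\<dots> = (1 - (norm (f 0))\<^sup>2) / (1 + \<gamma>)"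
    unfolding omega_to_disk_fps_geometric_nth[OF assms(1,4)] norm_of_real using assms(1) by simp
  finally show ?thesis .
qed

section \<open>The Bohr inequality\<close>

lemma geometric_majorant:
  fixes c :: "nat \<Rightarrow> real"
  assumes "\<And>n. 0 \<le> c n" "\<And>n. c n \<le> B" "0 \<le> r" "r < 1"
  shows geometric_majorant_summable: "summable (\<lambda>n. c n * r ^ n)"
    and geometric_majorant_le: "(\<Sum>n. c n * r ^ n) \<le> B / (1 - r)"
proof -
  have geometric: "(\<lambda>n. B * r ^ n) sums (B / (1 - r))"
    using sums_mult[OF geometric_sums, of r B] assms(3,4) by simp
  have term_le: "c n * r ^ n \<le> B * r ^ n" for n
    using assms by (intro mult_right_mono) auto
  show "summable (\<lambda>n. c n * r ^ n)"
    using assms(1,3) term_le by (intro summable_comparison_test'[OF sums_summable[OF geometric]]) auto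
  then show "(\<Sum>n. c n * r ^ n) \<le> B / (1 - r)"
    using term_le geometric by (intro sums_le[OF _ summable_sums]) auto
qed

lemma sum_norm_taylor_coeff_le:
  assumes coeff: "\<And>n. norm (taylor_coeff f (Suc n)) \<le> B" and r: "0 \<le> r" "r < 1"
  shows "(\<Sum>n. norm (taylor_coeff f n) * r ^ n) \<le> norm (f 0) + B * (r / (1 - r))"
proof -
  define a where "a = taylor_coeff f"
  have tail: "summable (\<lambda>n. norm (a (Suc n)) * r ^ n)" "(\<Sum>n. norm (a (Suc n)) * r ^ n) \<le> B / (1 - r)"
    using geometric_majorant[of "\<lambda>n. norm (a (Suc n))" B r] coeff r by (simp_all add: a_def)
  have "(\<lambda>n. norm (a (Suc n)) * r ^ Suc n) sums (r * (\<Sum>n. norm (a (Suc n)) * r ^ n))"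
    using sums_mult[OF summable_sums[OF tail(1)], of r] by (simp add: mult_ac)
  then have "(\<lambda>n. norm (a n) * r ^ n) sums (r * (\<Sum>n. norm (a (Suc n)) * r ^ n) + norm (a 0))"
    using sums_Suc[of "\<lambda>n. norm (a n) * r ^ n"] by simp
  then show ?thesis
    using mult_left_mono[OF tail(2) r(1)] by (simp add: sums_iff a_def mult_ac)
qed

lemma sum_norm_taylor_coeff_squares:
  assumes coeff: "\<And>n. norm (taylor_coeff f (Suc n)) \<le> B" and r: "0 \<le> r" "r < 1"
  shows sum_norm_taylor_coeff_squares_summable:
      "summable (\<lambda>n. (norm (taylor_coeff f (Suc n)))\<^sup>2 * r ^ (2 * Suc n))"
    and sum_norm_taylor_coeff_squares_le:
      "(\<Sum>n. (norm (taylor_coeff f (Suc n)))\<^sup>2 * r ^ (2 * Suc n)) \<le> B\<^sup>2 * (r\<^sup>2 / (1 - r\<^sup>2))"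
proof -
  define c where "c n = (norm (taylor_coeff f (Suc n)))\<^sup>2" for n
  have r2: "0 \<le> r\<^sup>2" "r\<^sup>2 < 1"
    using r by (simp_all add: abs_square_less_1)
  have squares: "summable (\<lambda>n. c n * (r\<^sup>2) ^ n)" "(\<Sum>n. c n * (r\<^sup>2) ^ n) \<le> B\<^sup>2 / (1 - r\<^sup>2)"
    using geometric_majorant[of c "B\<^sup>2" "r\<^sup>2"] coeff r2 by (simp_all add: c_def power_mono)
  have "r ^ (2 * Suc n) = r\<^sup>2 * (r\<^sup>2) ^ n" for n
    by (simp add: power_mult[symmetric] power_add[symmetric])
  then have split: "(\<lambda>n. c n * r ^ (2 * Suc n)) = (\<lambda>n. r\<^sup>2 * (c n * (r\<^sup>2) ^ n))"
    by (simp only: mult.left_commute)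
  have "summable (\<lambda>n. c n * r ^ (2 * Suc n))"
    unfolding split by (rule summable_mult[OF squares(1)])
  then show "summable (\<lambda>n. (norm (taylor_coeff f (Suc n)))\<^sup>2 * r ^ (2 * Suc n))"
    by (simp only: c_def)
  have "(\<Sum>n. c n * r ^ (2 * Suc n)) = r\<^sup>2 * (\<Sum>n. c n * (r\<^sup>2) ^ n)"
    unfolding split by (rule suminf_mult[OF squares(1)])
  also have "\<dots> \<le> B\<^sup>2 * (r\<^sup>2 / (1 - r\<^sup>2))"
    using mult_left_mono[OF squares(2) r2(1)] by (simp add: mult.commute)
  finally show "(\<Sum>n. (norm (taylor_coeff f (Suc n)))\<^sup>2 * r ^ (2 * Suc n)) \<le> B\<^sup>2 * (r\<^sup>2 / (1 - r\<^sup>2))"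
    by (simp add: c_def)
qed

lemma bohr_lhs_le_of_taylor_coeff_bound:
  assumes "\<And>n. norm (taylor_coeff f (Suc n)) \<le> B" "0 \<le> r" "r < 1"
  defines "x \<equiv> norm (f 0)"
  shows "bohr_lhs f r \<le> x + B * (r / (1 - r)) + (1 / (1 + x) + r / (1 - r)) * (B\<^sup>2 * (r\<^sup>2 / (1 - r\<^sup>2)))"
proof -
  have "0 \<le> 1 / (1 + x) + r / (1 - r)"
    using assms(2,3) by (simp add: x_def)
  then show ?thesis
    using sum_norm_taylor_coeff_le[OF assms(1-3)] mult_left_mono[OF sum_norm_taylor_coeff_squares_le[OF assms(1-3)]]
    by (simp add: bohr_lhs_def Let_def x_def add_mono)
qed

lemma sum_norm_taylor_coeff_le_bohr_lhs:
  assumes "\<And>n. norm (taylor_coeff f (Suc n)) \<le> B" "0 \<le> r" "r < 1"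
  shows "(\<Sum>n. norm (taylor_coeff f n) * r ^ n) \<le> bohr_lhs f r"
proof -
  have "0 \<le> 1 / (1 + norm (f 0)) + r / (1 - r)"
    using assms(2,3) by simp
  moreover have "0 \<le> (\<Sum>n. (norm (taylor_coeff f (Suc n)))\<^sup>2 * r ^ (2 * Suc n))"
    using assms(2) by (intro suminf_nonneg sum_norm_taylor_coeff_squares_summable[OF assms]) simp
  ultimately show ?thesis
    by (simp add: bohr_lhs_def Let_def)
qed

text \<open>
  The majorant at \<open>r = (1 + \<gamma>) / (3 + \<gamma>)\<close>, where \<open>r / (1 - r) = (1 + \<gamma>) / 2\<close> and
  \<open>r\<^sup>2 / (1 - r\<^sup>2) = (1 + \<gamma>)\<^sup>2 / (4 (2 + \<gamma>))\<close>.
\<close>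

lemma bohr_majorant_extremal_radius:
  fixes \<gamma> x :: real
  assumes "0 \<le> \<gamma>" "0 \<le> x" "x \<le> 1"
  shows "x + (1 - x\<^sup>2) / 2 + (1 / (1 + x) + (1 + \<gamma>) / 2) * ((1 - x\<^sup>2)\<^sup>2 / (4 * (2 + \<gamma>))) \<le> 1"
proof -
  have cancel: "a / (2 * y) * (c * y\<^sup>2 / (4 * d)) = c * (y * a) / (8 * d)" if "0 < y" for a c d y :: real
    using that by (simp add: power2_eq_square field_simps)
  have "1 / (1 + x) + (1 + \<gamma>) / 2 = (2 + (1 + \<gamma>) * (1 + x)) / (2 * (1 + x))"
    using assms by (simp add: field_simps)
  moreover have "(1 - x\<^sup>2)\<^sup>2 = (1 - x)\<^sup>2 * (1 + x)\<^sup>2"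
    by (simp add: power2_eq_square algebra_simps)
  ultimately have "(1 / (1 + x) + (1 + \<gamma>) / 2) * ((1 - x\<^sup>2)\<^sup>2 / (4 * (2 + \<gamma>)))
      = (2 + (1 + \<gamma>) * (1 + x)) / (2 * (1 + x)) * ((1 - x)\<^sup>2 * (1 + x)\<^sup>2 / (4 * (2 + \<gamma>)))"
    by simp
  also have "\<dots> = (1 - x)\<^sup>2 * ((1 + x) * (2 + (1 + \<gamma>) * (1 + x))) / (8 * (2 + \<gamma>))"
    using assms by (intro cancel) simp
  also have "\<dots> \<le> (1 - x)\<^sup>2 * (4 * (2 + \<gamma>)) / (8 * (2 + \<gamma>))"
  proof -
    have "(1 + x) * (2 + (1 + \<gamma>) * (1 + x)) \<le> 2 * (2 + (1 + \<gamma>) * 2)"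
      using assms by (intro mult_mono add_left_mono mult_left_mono) auto
    then show ?thesis
      using assms by (intro divide_right_mono mult_left_mono) auto
  qed
  also have "\<dots> = (1 - x)\<^sup>2 / 2"
    using assms by (simp add: field_simps)
  finally show ?thesis
    by (simp add: power2_eq_square field_simps)
qed

lemma bohr_majorant_le_one:
  fixes \<gamma> x r :: real
  assumes "0 \<le> \<gamma>" "0 \<le> x" "x \<le> 1" "0 \<le> r" "r \<le> (1 + \<gamma>) / (3 + \<gamma>)"
  defines "B \<equiv> (1 - x\<^sup>2) / (1 + \<gamma>)"
  shows "x + B * (r / (1 - r)) + (1 / (1 + x) + r / (1 - r)) * (B\<^sup>2 * (r\<^sup>2 / (1 - r\<^sup>2))) \<le> 1"
proof -
  have r3: "r * (3 + \<gamma>) \<le> 1 + \<gamma>"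
    using assms by (simp add: field_simps)
  have "(1 + \<gamma>) / (3 + \<gamma>) < 1"
    using assms by simp
  then have r1: "r < 1"
    using assms by linarith
  have B: "0 \<le> B"
    using assms by (simp add: B_def abs_square_le_1)
  have r2: "r\<^sup>2 < 1"
    using assms r1 by (simp add: abs_square_less_1)
  have R: "r / (1 - r) \<le> (1 + \<gamma>) / 2"
    using r1 r3 by (simp add: field_simps)
  have S: "r\<^sup>2 / (1 - r\<^sup>2) \<le> (1 + \<gamma>)\<^sup>2 / (4 * (2 + \<gamma>))"
  proof -
    have "(r * (3 + \<gamma>))\<^sup>2 \<le> (1 + \<gamma>)\<^sup>2"
      using r3 assms by (intro power_mono) auto
    then have "r\<^sup>2 * (4 * (2 + \<gamma>)) \<le> (1 + \<gamma>)\<^sup>2 * (1 - r\<^sup>2)"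
      by (simp add: power2_eq_square algebra_simps)
    with r2 show ?thesis
      using assms by (simp add: field_simps)
  qed
  have "x + B * (r / (1 - r)) + (1 / (1 + x) + r / (1 - r)) * (B\<^sup>2 * (r\<^sup>2 / (1 - r\<^sup>2)))
      \<le> x + B * ((1 + \<gamma>) / 2) + (1 / (1 + x) + (1 + \<gamma>) / 2) * (B\<^sup>2 * ((1 + \<gamma>)\<^sup>2 / (4 * (2 + \<gamma>))))"
    using assms r1 r2 B R S by (intro add_mono mult_mono mult_left_mono order.refl) auto
  also have "\<dots> = x + (1 - x\<^sup>2) / 2 + (1 / (1 + x) + (1 + \<gamma>) / 2) * ((1 - x\<^sup>2)\<^sup>2 / (4 * (2 + \<gamma>)))"
    using assms by (simp add: B_def power_divide)
  also have "\<dots> \<le> 1"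
    using assms(1-3) by (rule bohr_majorant_extremal_radius)
  finally show ?thesis .
qed

lemma bohr_inequality:
  assumes "0 \<le> \<gamma>" "\<gamma> < 1" "f \<in> bclass (Omega \<gamma>)" "0 \<le> r" "r \<le> (1 + \<gamma>) / (3 + \<gamma>)"
  shows "bohr_lhs f r \<le> 1"
proof -
  have "(1 + \<gamma>) / (3 + \<gamma>) < 1"
    using assms(1) by simp
  then have r: "r < 1"
    using assms(5) by linarith
  have "norm (f 0) \<le> 1"
    using assms(3) zero_in_Omega[OF assms(1,2)] by (auto simp: bclass_def)
  moreover have "norm (taylor_coeff f (Suc n)) \<le> (1 - (norm (f 0))\<^sup>2) / (1 + \<gamma>)" for n
    using bclass_Omega_taylor_coeff_bound[OF assms(1-3)] by simp
  ultimately show ?thesis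
    using bohr_lhs_le_of_taylor_coeff_bound[OF _ assms(4) r] bohr_majorant_le_one[OF assms(1) _ _ assms(4,5)]
    by (meson norm_ge_zero order_trans)
qed

section \<open>Sharpness of the radius\<close>

definition bohr_extremal :: "real \<Rightarrow> real \<Rightarrow> complex \<Rightarrow> complex" where
  "bohr_extremal \<gamma> a z =
     (of_real (a * (1 + \<gamma>)) - of_real (1 + a * \<gamma>) * z) / (of_real (1 + \<gamma>) - of_real (\<gamma> + a) * z)"

lemma bohr_extremal_eq_Moebius:
  assumes "0 \<le> \<gamma>" "\<gamma> < 1" "\<bar>a\<bar> < 1" "z \<in> Omega \<gamma>"
  shows "of_real (1 + \<gamma>) - of_real (\<gamma> + a) * z \<noteq> 0"
    and "bohr_extremal \<gamma> a z = - Moebius_function 0 (of_real a) (omega_to_disk \<gamma> z)"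
proof -
  define D where "D = of_real (1 + \<gamma>) - of_real \<gamma> * z"
  define w where "w = omega_to_disk \<gamma> z"
  have D: "D \<noteq> 0" and z: "z = w * D"
    using Omega_denominator_nonzero[OF assms(1,2,4)] by (simp_all add: D_def w_def omega_to_disk_def)
  have "norm (of_real a * w) < 1 * 1"
    unfolding norm_mult norm_of_real w_def
    using assms(3) norm_omega_to_disk_less_1[OF assms(1,2,4)] by (rule mult_strict_mono') simp_all
  then have Mden: "1 - of_real a * w \<noteq> 0"
    by auto
  have "D * (1 - of_real a * w) = D - of_real a * (w * D)"
    by (simp add: algebra_simps)
  then have den: "of_real (1 + \<gamma>) - of_real (\<gamma> + a) * z = D * (1 - of_real a * w)"
    unfolding z[symmetric] by (simp add: D_def algebra_simps)
  then show "of_real (1 + \<gamma>) - of_real (\<gamma> + a) * z \<noteq> 0"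
    using D Mden by simp
  have "D * (of_real a - w) = of_real a * D - w * D"
    by (simp add: algebra_simps)
  then have num: "of_real (a * (1 + \<gamma>)) - of_real (1 + a * \<gamma>) * z = D * (of_real a - w)"
    unfolding z[symmetric] by (simp add: D_def algebra_simps)
  then show "bohr_extremal \<gamma> a z = - Moebius_function 0 (of_real a) (omega_to_disk \<gamma> z)"
    unfolding bohr_extremal_def num den Moebius_function_simple w_def[symmetric]
    using D Mden by (simp add: minus_divide_left)
qed

lemma bohr_extremal_in_bclass:
  assumes "0 \<le> \<gamma>" "\<gamma> < 1" "\<bar>a\<bar> < 1"
  shows "bohr_extremal \<gamma> a \<in> bclass (Omega \<gamma>)"
proof -
  have "bohr_extremal \<gamma> a holomorphic_on Omega \<gamma>"
    unfolding bohr_extremal_def[abs_def]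
    using bohr_extremal_eq_Moebius(1)[OF assms] by (intro holomorphic_intros) auto
  moreover have "norm (bohr_extremal \<gamma> a z) \<le> 1" if "z \<in> Omega \<gamma>" for z
    using Moebius_function_norm_lt_1[of "of_real a" "omega_to_disk \<gamma> z" 0]
      norm_omega_to_disk_less_1[OF assms(1,2) that] assms
    by (simp add: bohr_extremal_eq_Moebius(2)[OF assms that])
  ultimately show ?thesis
    by (simp add: bclass_def analytic_on_open open_Omega)
qed

lemma bohr_extremal_coeff_recurrence:
  fixes \<gamma> a :: real
  assumes "0 \<le> \<gamma>"
  defines "q \<equiv> (\<gamma> + a) / (1 + \<gamma>)"
  defines "e \<equiv> \<lambda>n. if n = 0 then a else - ((1 - a\<^sup>2) * q ^ (n - 1) / (1 + \<gamma>))"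
  shows "(1 + \<gamma>) * e m - (if m = 0 then 0 else (\<gamma> + a) * e (m - 1))
       = (if m = 0 then a * (1 + \<gamma>) else if m = 1 then - (1 + a * \<gamma>) else 0)"
proof (cases m)
  case (Suc k)
  show ?thesis
  proof (cases k)
    case 0
    then show ?thesis
      using Suc assms(1) by (simp add: e_def field_simps power2_eq_square)
  next
    case (Suc j)
    have "(1 + \<gamma>) * ((1 - a\<^sup>2) * q ^ Suc j / (1 + \<gamma>)) = (1 - a\<^sup>2) * q ^ Suc j"
      using assms(1) by simp
    moreover have "(\<gamma> + a) * ((1 - a\<^sup>2) * q ^ j / (1 + \<gamma>)) = (1 - a\<^sup>2) * q ^ Suc j"
      using assms(1) by (simp add: q_def)
    ultimately show ?thesis
      using Suc \<open>m = Suc k\<close> by (simp add: e_def)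
  qed
qed (simp add: e_def)

lemma bohr_extremal_taylor_coeff:
  fixes \<gamma> a :: real
  assumes "0 \<le> \<gamma>"
  defines "q \<equiv> (\<gamma> + a) / (1 + \<gamma>)"
  shows "taylor_coeff (bohr_extremal \<gamma> a) n
       = of_real (if n = 0 then a else - ((1 - a\<^sup>2) * q ^ (n - 1) / (1 + \<gamma>)))"
proof -
  define e where "e n = (if n = 0 then a else - ((1 - a\<^sup>2) * q ^ (n - 1) / (1 + \<gamma>)))" for n
  define N where "N = fps_const (complex_of_real (a * (1 + \<gamma>))) - fps_const (of_real (1 + a * \<gamma>)) * fps_X"
  define D where "D = fps_const (complex_of_real (1 + \<gamma>)) - fps_const (of_real (\<gamma> + a)) * fps_X"
  have D0: "D $ 0 \<noteq> 0"
    using one_plus_of_real_nonzero[OF assms(1)] by (simp add: D_def)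
  have "bohr_extremal \<gamma> a has_fps_expansion N / D"
    unfolding bohr_extremal_def[abs_def] N_def D_def
    by (intro fps_expansion_intros) (use D0 in \<open>simp add: D_def\<close>)
  also have "N / D = Abs_fps (\<lambda>n. of_real (e n))"
  proof (rule fps_divide_eqI[OF D0])
    have "Abs_fps (\<lambda>n. of_real (e n)) * D
        = Abs_fps (\<lambda>m. of_real (if m = 0 then a * (1 + \<gamma>) else if m = 1 then - (1 + a * \<gamma>) else 0))"
      unfolding D_def e_def q_def using assms(1) by (intro fps_of_real_mult_linear bohr_extremal_coeff_recurrence)
    also have "\<dots> = N"
      by (rule fps_ext) (simp add: N_def)
    finally show "Abs_fps (\<lambda>n. of_real (e n)) * D = N" .
  qed
  finally show ?thesis
    by (simp add: taylor_coeff_eq_fps_nth e_def)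
qed

lemma sum_norm_bohr_extremal:
  assumes "0 \<le> \<gamma>" "0 \<le> a" "a < 1" "0 \<le> r" "r < 1"
  defines "q \<equiv> (\<gamma> + a) / (1 + \<gamma>)"
  shows "(\<lambda>n. norm (taylor_coeff (bohr_extremal \<gamma> a) n) * r ^ n)
           sums (a + (1 - a\<^sup>2) * r / ((1 + \<gamma>) * (1 - q * r)))"
proof -
  have q: "0 \<le> q" "q < 1"
    using assms by (simp_all add: q_def)
  have qr: "q * r < 1"
    using q assms(4,5) mult_strict_mono'[of q 1 r 1] by simp
  define g where "g = (\<lambda>n. norm (taylor_coeff (bohr_extremal \<gamma> a) n) * r ^ n)"
  have coeff: "norm (taylor_coeff (bohr_extremal \<gamma> a) n)
      = (if n = 0 then a else (1 - a\<^sup>2) * q ^ (n - 1) / (1 + \<gamma>))" for n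
    unfolding bohr_extremal_taylor_coeff[OF assms(1)] norm_of_real q_def[symmetric]
    using assms(1-3) q by (simp add: abs_square_le_1)
  then have "(\<lambda>n. g (Suc n)) = (\<lambda>n. ((1 - a\<^sup>2) * r / (1 + \<gamma>)) * (q * r) ^ n)"
    by (simp add: g_def power_mult_distrib mult_ac)
  moreover have "(\<lambda>n. ((1 - a\<^sup>2) * r / (1 + \<gamma>)) * (q * r) ^ n)
      sums (((1 - a\<^sup>2) * r / (1 + \<gamma>)) * (1 / (1 - q * r)))"
    using q assms(4) qr by (intro sums_mult geometric_sums) simp
  ultimately have "(\<lambda>n. g (Suc n)) sums ((1 - a\<^sup>2) * r / ((1 + \<gamma>) * (1 - q * r)))"
    by simp
  then have "g sums ((1 - a\<^sup>2) * r / ((1 + \<gamma>) * (1 - q * r)) + g 0)"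
    by (rule sums_Suc)
  then show ?thesis
    by (simp add: g_def coeff add.commute)
qed

lemma bohr_extremal_majorant_gt_one:
  fixes \<gamma> a r :: real
  assumes "0 \<le> \<gamma>" "0 \<le> a" "a < 1" "0 \<le> r" "r < 1" "(1 + \<gamma>) * (1 - r) < 2 * a * r"
  defines "q \<equiv> (\<gamma> + a) / (1 + \<gamma>)"
  shows "1 < a + (1 - a\<^sup>2) * r / ((1 + \<gamma>) * (1 - q * r))"
proof -
  have denom: "(1 + \<gamma>) * (1 - q * r) = (1 + \<gamma>) - (\<gamma> + a) * r"
    using assms(1) by (simp add: q_def field_simps)
  have "(\<gamma> + a) * r \<le> \<gamma> + a"
    using assms by (intro mult_left_le) auto
  then have "(\<gamma> + a) * r < 1 + \<gamma>"
    using assms(3) by linarith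
  then have pos: "0 < (1 + \<gamma>) * (1 - q * r)"
    unfolding denom by simp
  have "(1 - a\<^sup>2) * r - (1 - a) * ((1 + \<gamma>) * (1 - q * r)) = (1 - a) * (2 * a * r - (1 + \<gamma>) * (1 - r))"
    unfolding denom by (simp add: power2_eq_square algebra_simps)
  also have "\<dots> > 0"
    using assms by simp
  finally have "1 - a < (1 - a\<^sup>2) * r / ((1 + \<gamma>) * (1 - q * r))"
    using pos by (simp add: pos_less_divide_eq)
  then show ?thesis
    by simp
qed

lemma bohr_lhs_bohr_extremal_gt_one:
  assumes "0 \<le> \<gamma>" "\<gamma> < 1" "0 \<le> a" "a < 1" "0 \<le> r" "r < 1" "(1 + \<gamma>) * (1 - r) < 2 * a * r"
  shows "1 < bohr_lhs (bohr_extremal \<gamma> a) r"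
proof -
  have f: "bohr_extremal \<gamma> a \<in> bclass (Omega \<gamma>)"
    using assms by (intro bohr_extremal_in_bclass) auto
  have "- (norm (bohr_extremal \<gamma> a 0))\<^sup>2 \<le> \<gamma>"
    using assms(1) zero_le_power2[of "norm (bohr_extremal \<gamma> a 0)"] by linarith
  then have "(1 - (norm (bohr_extremal \<gamma> a 0))\<^sup>2) / (1 + \<gamma>) \<le> 1"
    using assms(1) by simp
  then have "norm (taylor_coeff (bohr_extremal \<gamma> a) (Suc n)) \<le> 1" for n
    using bclass_Omega_taylor_coeff_bound[OF assms(1,2) f, of "Suc n"] by linarith
  then have "(\<Sum>n. norm (taylor_coeff (bohr_extremal \<gamma> a) n) * r ^ n) \<le> bohr_lhs (bohr_extremal \<gamma> a) r"
    using assms(5,6) by (intro sum_norm_taylor_coeff_le_bohr_lhs) auto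
  moreover have "1 < (\<Sum>n. norm (taylor_coeff (bohr_extremal \<gamma> a) n) * r ^ n)"
    using sums_unique[OF sum_norm_bohr_extremal[OF assms(1,3,4,5,6)]]
      bohr_extremal_majorant_gt_one[OF assms(1,3-7)] by simp
  ultimately show ?thesis
    by linarith
qed

lemma bohr_radius_sharp:
  assumes "0 \<le> \<gamma>" "\<gamma> < 1" "(1 + \<gamma>) / (3 + \<gamma>) < r" "r < 1"
  shows "\<exists>f \<in> bclass (Omega \<gamma>). 1 < bohr_lhs f r"
proof -
  \<comment> \<open>any \<open>a\<close> strictly between \<open>t < 1\<close> and \<open>1\<close> works\<close>
  define t where "t = (1 + \<gamma>) * (1 - r) / (2 * r)"
  define a where "a = (1 + t) / 2"
  have "0 < (1 + \<gamma>) / (3 + \<gamma>)"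
    using assms(1) by simp
  then have r: "0 < r"
    using assms(3) by linarith
  have r3: "1 + \<gamma> < r * (3 + \<gamma>)"
    using assms(1,3) by (simp add: pos_divide_less_eq)
  have "0 < (1 + \<gamma>) * (1 - r)"
    using assms(1,4) by simp
  then have t: "0 < t" "t < 1"
    using r r3 unfolding t_def by (simp_all add: pos_divide_less_eq algebra_simps)
  have "2 * r * t = (1 + \<gamma>) * (1 - r)"
    using r unfolding t_def by simp
  moreover have "r * t < r * 1"
    using r t by (intro mult_strict_left_mono)
  ultimately have a: "0 \<le> a" "a < 1" "(1 + \<gamma>) * (1 - r) < 2 * a * r"
    using t by (simp_all add: a_def algebra_simps)
  then show ?thesis
    using assms r bohr_extremal_in_bclass[of \<gamma> a] bohr_lhs_bohr_extremal_gt_one[of \<gamma> a r] by auto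
qed

theorem theorem2:
  fixes \<gamma> :: real
  assumes "0 \<le> \<gamma>" and "\<gamma> < 1"
  shows "(\<forall>f \<in> bclass (Omega \<gamma>). \<forall>r. 0 \<le> r \<and> r \<le> (1 + \<gamma>) / (3 + \<gamma>) \<longrightarrow>
            bohr_lhs f r \<le> 1)
       \<and> (\<forall>r. (1 + \<gamma>) / (3 + \<gamma>) < r \<and> r < 1 \<longrightarrow>
            (\<exists>f \<in> bclass (Omega \<gamma>). bohr_lhs f r > 1))"
  using bohr_inequality[OF assms] bohr_radius_sharp[OF assms] by blast

end
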